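(* Let $0<a<1$ and let $\Psi:\overline{\Omega}\times(0,+\infty)\to\mathbb{R}$ be a Hölder continuous function such that for each $x\in\Omega$ the map $s\mapsto\Psi(x,s)/s$ is strictly decreasing on $(0,+\infty)$. Assume $v,w\in C^2(\Omega)\cap C(\overline{\Omega})$ satisfy (a) $\Delta w+\Psi(x,w)+|\nabla w|^a\le0\le\Delta v+\Psi(x,v)+|\nabla v|^a$ in $\Omega$; (b) $v,w>0$ in $\Omega$ and $v<w$ on $\partial\Omega$. Then $v\le w$ in $\Omega$.
   Context: $\Omega\subset\mathbb{R}^N$ ($N\ge 2$) is a bounded domain with smooth boundary. *)

theory Defs
  imports "HOL-Analysis.Analysis"
begin

definition pd :: "'n::finite \<Rightarrow> (real^'n \<Rightarrow> real) \<Rightarrow> real^'n \<Rightarrow> real" where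
  "pd i f x = frechet_derivative f (at x) (axis i 1)"

fun Ck_on :: "nat \<Rightarrow> (real^'n::finite \<Rightarrow> real) \<Rightarrow> (real^'n) set \<Rightarrow> bool" where
  "Ck_on 0 f U = continuous_on U f"
| "Ck_on (Suc k) f U =
     ((\<forall>x\<in>U. f differentiable (at x)) \<and> (\<forall>i. Ck_on k (pd i f) U))"

definition smooth_on :: "(real^'n::finite \<Rightarrow> real) \<Rightarrow> (real^'n) set \<Rightarrow> bool" where
  "smooth_on f U \<longleftrightarrow> (\<forall>k. Ck_on k f U)"

definition grad :: "(real^'n::finite \<Rightarrow> real) \<Rightarrow> real^'n \<Rightarrow> real^'n" where
  "grad f x = (\<chi> i. pd i f x)"

definition laplacian :: "(real^'n::finite \<Rightarrow> real) \<Rightarrow> real^'n \<Rightarrow> real" where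
  "laplacian f x = (\<Sum>i\<in>UNIV. pd i (pd i f) x)"

definition smooth_boundary :: "(real^'n::finite) set \<Rightarrow> bool" where
  "smooth_boundary \<Omega> \<longleftrightarrow>
     (\<forall>p\<in>frontier \<Omega>. \<exists>U \<rho>. open U \<and> p \<in> U \<and> smooth_on \<rho> U \<and>
        (\<forall>x\<in>U. grad \<rho> x \<noteq> 0) \<and> \<Omega> \<inter> U = {x\<in>U. \<rho> x < 0})"

definition holder_on :: "('a::metric_space) set \<Rightarrow> ('a \<Rightarrow> real) \<Rightarrow> bool" where
  "holder_on S f \<longleftrightarrow> (\<forall>K. compact K \<and> K \<subseteq> S \<longrightarrow>
     (\<exists>\<alpha> C. 0 < \<alpha> \<and> \<alpha> \<le> 1 \<and> (\<forall>x\<in>K. \<forall>y\<in>K. \<bar>f x - f y\<bar> \<le> C * dist x y powr \<alpha>)))"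

end

theory Submission
  imports Defs
begin

text \<open>If v exceeded w somewhere, the maximum t of v/w over the closure would be greater than 1
  and, because v < w on the boundary, attained at an interior point p. There t w touches v
  from above, so \<open>\<nabla>v = t \<nabla>w\<close> and \<open>\<Delta>v \<le> t \<Delta>w\<close> at p. Since a < 1 the gradient term scales by
  \<open>t powr a \<le> t\<close>, and the strict decrease of \<open>\<Psi>(x,s)/s\<close> gives \<open>\<Psi>(p, t w) < t \<Psi>(p, w)\<close>; so at p
  the sub-solution inequality for v is strictly below t times the super-solution inequality
  for w, i.e. \<open>0 < 0\<close>.\<close>

lemma has_real_derivative_along_line:
  fixes f :: "'a::real_normed_vector \<Rightarrow> real"
  assumes "f differentiable (at (x + s *\<^sub>R e))"
  shows "((\<lambda>s. f (x + s *\<^sub>R e)) has_real_derivative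
           frechet_derivative f (at (x + s *\<^sub>R e)) e) (at s)"
proof -
  let ?L = "frechet_derivative f (at (x + s *\<^sub>R e))"
  have f': "(f has_derivative ?L) (at (x + s *\<^sub>R e))"
    using assms frechet_derivative_works by blast
  have line: "((\<lambda>s. x + s *\<^sub>R e) has_derivative (\<lambda>h. h *\<^sub>R e)) (at s)"
    by (auto intro!: derivative_eq_intros)
  have "((\<lambda>s. f (x + s *\<^sub>R e)) has_derivative (\<lambda>h. ?L (h *\<^sub>R e))) (at s)"
    using has_derivative_compose[OF line f'] by (simp add: o_def)
  moreover have "(\<lambda>h. ?L (h *\<^sub>R e)) = (*) (?L e)"
    using linear_scale[OF has_derivative_linear[OF f']] by (auto simp: mult.commute)
  ultimately show ?thesis
    by (simp add: has_field_derivative_def)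
qed

lemma local_min_imp_second_deriv_nonneg:
  fixes h h' :: "real \<Rightarrow> real"
  assumes "0 < \<delta>"
    and h': "\<And>s. \<bar>s - x\<bar> < \<delta> \<Longrightarrow> (h has_real_derivative h' s) (at s)"
    and h'': "(h' has_real_derivative D) (at x)"
    and min: "\<And>s. \<bar>s - x\<bar> < \<delta> \<Longrightarrow> h x \<le> h s"
  shows "0 \<le> D"
proof (rule ccontr)
  assume "\<not> 0 \<le> D"
  then obtain e where "e > 0" and dec: "\<And>r. 0 < r \<Longrightarrow> r < e \<Longrightarrow> h' (x + r) < h' x"
    using DERIV_neg_dec_right[OF h''] by force
  have "h' x = 0"
    by (rule DERIV_local_min[OF h' \<open>0 < \<delta>\<close>]) (use \<open>0 < \<delta>\<close> min in auto)
  define r where "r = min e \<delta> / 2"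
  have r: "0 < r" "r < e" "r < \<delta>"
    using \<open>e > 0\<close> \<open>0 < \<delta>\<close> by (auto simp: r_def)
  have "\<forall>s. x \<le> s \<and> s \<le> x + r \<longrightarrow> (h has_real_derivative h' s) (at s)"
    using r by (auto intro!: h')
  then obtain z where z: "x < z" "z < x + r" "h (x + r) - h x = r * h' z"
    using MVT2[of x "x + r" h h'] r by auto
  have "h' z < 0"
    using dec[of "z - x"] z r \<open>h' x = 0\<close> by auto
  then have "h (x + r) < h x"
    using z mult_pos_neg[OF \<open>0 < r\<close> \<open>h' z < 0\<close>] by linarith
  moreover have "h x \<le> h (x + r)"
    using min r by auto
  ultimately show False
    by simp
qed

lemma has_real_derivative_pd_along_axis:
  assumes "f differentiable (at (x + s *\<^sub>R axis i 1))"
  shows "((\<lambda>s. f (x + s *\<^sub>R axis i 1)) has_real_derivative pd i f (x + s *\<^sub>R axis i 1)) (at s)"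
  using has_real_derivative_along_line[OF assms] by (simp add: pd_def)

lemma Ck_on_2_differentiable:
  assumes "Ck_on 2 f U" "x \<in> U"
  shows "f differentiable (at x)" "pd i f differentiable (at x)"
  using assms by (simp_all add: numeral_2_eq_2)

text \<open>Along each coordinate line through the touching point, \<open>c w - v\<close> has a local minimum there.\<close>

lemma touching_above_partials:
  fixes v w :: "real^'n::finite \<Rightarrow> real"
  assumes "open U" "x\<^sub>0 \<in> U" "Ck_on 2 v U" "Ck_on 2 w U"
    and below: "\<And>y. y \<in> U \<Longrightarrow> v y \<le> c * w y"
    and touch: "v x\<^sub>0 = c * w x\<^sub>0"
  shows "pd i v x\<^sub>0 = c * pd i w x\<^sub>0 \<and> pd i (pd i v) x\<^sub>0 \<le> c * pd i (pd i w) x\<^sub>0"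
proof -
  let ?e = "axis i (1::real) :: real^'n"
  let ?y = "\<lambda>s. x\<^sub>0 + s *\<^sub>R ?e"
  obtain \<epsilon> where "\<epsilon> > 0" "ball x\<^sub>0 \<epsilon> \<subseteq> U"
    using assms(1,2) open_contains_ball by blast
  then have on_line: "\<bar>s\<bar> < \<epsilon> \<Longrightarrow> ?y s \<in> U" for s
    by (auto simp: dist_norm subset_iff)
  define h where "h s = c * w (?y s) - v (?y s)" for s
  define h' where "h' s = c * pd i w (?y s) - pd i v (?y s)" for s
  have h': "(h has_real_derivative h' s) (at s)" if "\<bar>s\<bar> < \<epsilon>" for s
    unfolding h_def h'_def using on_line[OF that] assms(3,4)
    by (intro DERIV_diff DERIV_cmult has_real_derivative_pd_along_axis Ck_on_2_differentiable)
  have "(h' has_real_derivative (c * pd i (pd i w) (?y 0) - pd i (pd i v) (?y 0))) (at 0)"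
    unfolding h'_def using assms(2-4)
    by (intro DERIV_diff DERIV_cmult has_real_derivative_pd_along_axis Ck_on_2_differentiable) auto
  then have h'': "(h' has_real_derivative (c * pd i (pd i w) x\<^sub>0 - pd i (pd i v) x\<^sub>0)) (at 0)"
    by simp
  have min: "h 0 \<le> h s" if "\<bar>s\<bar> < \<epsilon>" for s
    using below[OF on_line[OF that]] touch by (simp add: h_def)
  have "0 \<le> c * pd i (pd i w) x\<^sub>0 - pd i (pd i v) x\<^sub>0"
    by (rule local_min_imp_second_deriv_nonneg[of \<epsilon> 0 h h', OF \<open>\<epsilon> > 0\<close> _ h'']) (use h' min in auto)
  moreover have "h' 0 = 0"
    by (rule DERIV_local_min[OF h'[of 0] \<open>\<epsilon> > 0\<close>]) (use \<open>\<epsilon> > 0\<close> min in auto)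
  ultimately show ?thesis
    by (simp add: h'_def)
qed

lemma touching_above_grad_laplacian:
  fixes v w :: "real^'n::finite \<Rightarrow> real"
  assumes "open U" "x\<^sub>0 \<in> U" "Ck_on 2 v U" "Ck_on 2 w U"
    and "\<And>y. y \<in> U \<Longrightarrow> v y \<le> c * w y" "v x\<^sub>0 = c * w x\<^sub>0"
  shows "grad v x\<^sub>0 = c *\<^sub>R grad w x\<^sub>0" "laplacian v x\<^sub>0 \<le> c * laplacian w x\<^sub>0"
proof -
  note partials = touching_above_partials[OF assms]
  show "grad v x\<^sub>0 = c *\<^sub>R grad w x\<^sub>0"
    using partials by (simp add: grad_def vec_eq_iff)
  have "(\<Sum>i\<in>UNIV. pd i (pd i v) x\<^sub>0) \<le> (\<Sum>i\<in>UNIV. c * pd i (pd i w) x\<^sub>0)"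
    using partials by (intro sum_mono) auto
  then show "laplacian v x\<^sub>0 \<le> c * laplacian w x\<^sub>0"
    by (simp add: laplacian_def sum_distrib_left)
qed

lemma scaled_powr_le:
  fixes t r a :: real
  assumes "1 \<le> t" "0 \<le> r" "0 < a" "a \<le> 1"
  shows "(t * r) powr a \<le> t * r powr a"
proof -
  have "t powr a \<le> t"
    using assms powr_mono[of a 1 t] by simp
  then have "t powr a * r powr a \<le> t * r powr a"
    by (intro mult_right_mono) auto
  then show ?thesis
    using assms by (simp add: powr_mult)
qed

lemma strict_antimono_ratio_scale:
  fixes f :: "real \<Rightarrow> real"
  assumes "strict_antimono_on {0<..} (\<lambda>s. f s / s)" "0 < s" "1 < t"
  shows "f (t * s) < t * f s"
proof -
  have "f (t * s) / (t * s) < f s / s"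
    using assms unfolding monotone_on_def by auto
  then show ?thesis
    using assms(2,3) by (simp add: field_simps)
qed

lemma ratio_max_interior:
  fixes v w :: "'a::metric_space \<Rightarrow> real"
  assumes "compact (closure \<Omega>)"
    and "continuous_on (closure \<Omega>) v" "continuous_on (closure \<Omega>) w"
    and w_pos: "\<And>x. x \<in> closure \<Omega> \<Longrightarrow> 0 < w x"
    and bdry: "\<And>x. x \<in> frontier \<Omega> \<Longrightarrow> v x < w x"
    and "x\<^sub>1 \<in> \<Omega>" "w x\<^sub>1 < v x\<^sub>1"
  obtains x\<^sub>0 t where "x\<^sub>0 \<in> \<Omega>" "1 < t" "v x\<^sub>0 = t * w x\<^sub>0" "\<And>y. y \<in> \<Omega> \<Longrightarrow> v y \<le> t * w y"
proof -
  have cont: "continuous_on (closure \<Omega>) (\<lambda>x. v x / w x)"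
    using assms(2,3) w_pos by (intro continuous_on_divide) (auto simp: order_less_imp_not_eq2)
  obtain x\<^sub>0 where x\<^sub>0: "x\<^sub>0 \<in> closure \<Omega>" and max: "\<And>y. y \<in> closure \<Omega> \<Longrightarrow> v y / w y \<le> v x\<^sub>0 / w x\<^sub>0"
    using continuous_attains_sup[OF assms(1) _ cont] \<open>x\<^sub>1 \<in> \<Omega>\<close> by auto
  define t where "t = v x\<^sub>0 / w x\<^sub>0"
  have x\<^sub>1_cl: "x\<^sub>1 \<in> closure \<Omega>"
    using assms(6) closure_subset by auto
  have "1 < v x\<^sub>1 / w x\<^sub>1"
    using assms(7) w_pos[OF x\<^sub>1_cl] by simp
  also have "\<dots> \<le> t"
    using max[OF x\<^sub>1_cl] by (simp add: t_def)
  finally have "1 < t" .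
  have "x\<^sub>0 \<in> \<Omega>"
  proof (rule ccontr)
    assume "x\<^sub>0 \<notin> \<Omega>"
    then have "x\<^sub>0 \<in> frontier \<Omega>"
      using x\<^sub>0 interior_subset by (auto simp: frontier_def)
    then have "v x\<^sub>0 < w x\<^sub>0"
      by (rule bdry)
    then show False
      using \<open>1 < t\<close> w_pos[OF x\<^sub>0] by (simp add: t_def)
  qed
  moreover have "v x\<^sub>0 = t * w x\<^sub>0"
    using w_pos[OF x\<^sub>0] by (simp add: t_def)
  moreover have "v y \<le> t * w y" if "y \<in> \<Omega>" for y
    using max[of y] w_pos[of y] that closure_subset by (auto simp: t_def divide_le_eq)
  ultimately show thesis
    using that \<open>1 < t\<close> by blast
qed

theorem lemma2p3:
  fixes \<Omega> :: "(real^'n) set"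
    and \<Psi> :: "real^'n \<Rightarrow> real \<Rightarrow> real"
    and v w :: "real^'n \<Rightarrow> real"
    and a :: real
  assumes N2: "CARD('n) \<ge> 2"
    and dom: "open \<Omega>" "connected \<Omega>" "bounded \<Omega>" "\<Omega> \<noteq> {}"
    and smooth: "smooth_boundary \<Omega>"
    and a: "0 < a" "a < 1"
    and Psi_holder: "holder_on (closure \<Omega> \<times> {0<..}) (\<lambda>(x, s). \<Psi> x s)"
    and Psi_dec: "\<And>x. x \<in> \<Omega> \<Longrightarrow> strict_antimono_on {0<..} (\<lambda>s. \<Psi> x s / s)"
    and v_reg: "Ck_on 2 v \<Omega>" "continuous_on (closure \<Omega>) v"
    and w_reg: "Ck_on 2 w \<Omega>" "continuous_on (closure \<Omega>) w"
    and w_super: "\<And>x. x \<in> \<Omega> \<Longrightarrow>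
        laplacian w x + \<Psi> x (w x) + norm (grad w x) powr a \<le> 0"
    and v_sub: "\<And>x. x \<in> \<Omega> \<Longrightarrow>
        0 \<le> laplacian v x + \<Psi> x (v x) + norm (grad v x) powr a"
    and pos: "\<And>x. x \<in> \<Omega> \<Longrightarrow> v x > 0 \<and> w x > 0"
    and bdry: "\<And>x. x \<in> frontier \<Omega> \<Longrightarrow> v x < w x"
  shows "\<forall>x\<in>\<Omega>. v x \<le> w x"
proof (rule ccontr)
  assume "\<not> (\<forall>x\<in>\<Omega>. v x \<le> w x)"
  then obtain x\<^sub>1 where x\<^sub>1: "x\<^sub>1 \<in> \<Omega>" "w x\<^sub>1 < v x\<^sub>1"
    by auto
  have "0 \<le> v x" if "x \<in> closure \<Omega>" for x
    using continuous_ge_on_closure[OF v_reg(2) that] pos by (simp add: less_imp_le)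
  then have w_pos: "0 < w x" if "x \<in> closure \<Omega>" for x
    using that pos bdry[of x] closure_Un_frontier[of \<Omega>] by fastforce
  obtain x\<^sub>0 t where x\<^sub>0: "x\<^sub>0 \<in> \<Omega>" and "1 < t"
    and touch_at: "v x\<^sub>0 = t * w x\<^sub>0" and below: "\<And>y. y \<in> \<Omega> \<Longrightarrow> v y \<le> t * w y"
    using ratio_max_interior[OF _ v_reg(2) w_reg(2) w_pos bdry x\<^sub>1] compact_closure dom(3) by blast
  note touch = touching_above_grad_laplacian[OF dom(1) x\<^sub>0 v_reg(1) w_reg(1) below touch_at]
  have "norm (grad v x\<^sub>0) powr a \<le> t * norm (grad w x\<^sub>0) powr a"
    using touch(1) scaled_powr_le[of t "norm (grad w x\<^sub>0)" a] \<open>1 < t\<close> a by simp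
  moreover have "\<Psi> x\<^sub>0 (v x\<^sub>0) < t * \<Psi> x\<^sub>0 (w x\<^sub>0)"
    using strict_antimono_ratio_scale[OF Psi_dec[OF x\<^sub>0]] pos[OF x\<^sub>0] \<open>1 < t\<close> touch_at
    by simp
  ultimately have "laplacian v x\<^sub>0 + \<Psi> x\<^sub>0 (v x\<^sub>0) + norm (grad v x\<^sub>0) powr a
      < t * (laplacian w x\<^sub>0 + \<Psi> x\<^sub>0 (w x\<^sub>0) + norm (grad w x\<^sub>0) powr a)"
    using touch(2) by (simp add: algebra_simps)
  also have "\<dots> \<le> 0"
    using w_super[OF x\<^sub>0] \<open>1 < t\<close> by (simp add: mult_nonneg_nonpos)
  finally show False
    using v_sub[OF x\<^sub>0] by simp
qed

end
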